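(* Let $X=\mathbb{CP}^2\#n\overline{\mathbb{CP}}^2$, $k$ a positive integer, $U_5=\{A\in H_2(X;\mathbb{Z}):\mathrm{ind}(A)\ge2k,\ A\cdot H>0\}$ with the preorder $\ge$ below. Every minimal element $A=aH-\sum_{i=1}^nb_iE_i$ of $U_5$ is reduced and satisfies $3a-\sum_{i=1}^nb_i\ge1$.
   Context: $K_0=-3H+E_1+\cdots+E_n$, $\mathrm{ind}(A):=A^2-K_0\cdot A$. With $H^2(X;\mathbb{R})\cong\mathbb{R}^{n+1}$ via $(x_0,\dots,x_n)\leftrightarrow x_0PD(H)-\sum x_iPD(E_i)$, the reduced cone $\mathcal{P}$ is: $0<x_1<x_0$ ($n=1$); $0<x_2\le x_1$, $x_1+x_2<x_0$ ($n=2$); $0<x_n\le\cdots\le x_1$, $x_1+x_2+x_3\le x_0$, $\sum x_i^2<x_0^2$ ($n\ge3$); and $\mathcal{P}^{c_1>0}=\{[\omega]\in\mathcal{P}:\omega(3H-\sum E_i)>0\}$. For $A,B\in U_5$, $A\ge B$ means $\omega(A)\ge\omega(B)$ for all $[\omega]\in\mathcal{P}^{c_1>0}$; $A$ is minimal if there is no other $B\in U_5$, $B\ne A$, with $A\ge B$. A class $aH-\sum b_iE_i$ is reduced if $a>0$, $b_1\ge b_2\ge\cdots\ge b_n\ge0$ and $a\ge b_1+b_2+b_3$. *)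

theory Defs
  imports Complex_Main
begin

text \<open>A class A = aH - sum_{i=1..n} b_i E_i in H_2(X;Z) is
  represented by the pair (a, b) with b :: nat => int, where b i = 0 for i outside {1..n}.
  A cohomology class [omega] <-> (x_0,...,x_n) is represented by x :: nat => real
  (only x 0, ..., x n are relevant).\<close>

definition is_class :: "nat \<Rightarrow> int \<times> (nat \<Rightarrow> int) \<Rightarrow> bool" where
  "is_class n A \<longleftrightarrow> (\<forall>i. i \<notin> {1..n} \<longrightarrow> snd A i = 0)"

text \<open>ind(A) = A.A - K_0.A with K_0 = -3H + E_1 + ... + E_n,
  H.H = 1, E_i.E_j = -delta_ij, H.E_i = 0.\<close>
definition self_int :: "nat \<Rightarrow> int \<times> (nat \<Rightarrow> int) \<Rightarrow> int" where
  "self_int n A = (fst A)^2 - (\<Sum>i=1..n. (snd A i)^2)"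

definition K0_dot :: "nat \<Rightarrow> int \<times> (nat \<Rightarrow> int) \<Rightarrow> int" where
  "K0_dot n A = -3 * fst A + (\<Sum>i=1..n. snd A i)"

definition ind :: "nat \<Rightarrow> int \<times> (nat \<Rightarrow> int) \<Rightarrow> int" where
  "ind n A = self_int n A - K0_dot n A"

definition dot_H :: "int \<times> (nat \<Rightarrow> int) \<Rightarrow> int" where
  "dot_H A = fst A"

text \<open>omega(A) for [omega] = x_0 PD(H) - sum x_i PD(E_i) and A = aH - sum b_i E_i.\<close>
definition omega_eval :: "nat \<Rightarrow> (nat \<Rightarrow> real) \<Rightarrow> int \<times> (nat \<Rightarrow> int) \<Rightarrow> real" where
  "omega_eval n x A = real_of_int (fst A) * x 0 - (\<Sum>i=1..n. x i * real_of_int (snd A i))"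

definition reduced_cone :: "nat \<Rightarrow> (nat \<Rightarrow> real) set" where
  "reduced_cone n =
    (if n = 1 then {x. 0 < x 1 \<and> x 1 < x 0}
     else if n = 2 then {x. 0 < x 2 \<and> x 2 \<le> x 1 \<and> x 1 + x 2 < x 0}
     else {x. 0 < x n \<and> (\<forall>i\<in>{1..<n}. x (Suc i) \<le> x i) \<and> x 1 + x 2 + x 3 \<le> x 0
              \<and> (\<Sum>i=1..n. (x i)^2) < (x 0)^2})"

text \<open>P^{c_1>0}: omega(3H - sum E_i) > 0.\<close>
definition cone_c1pos :: "nat \<Rightarrow> (nat \<Rightarrow> real) set" where
  "cone_c1pos n = {x \<in> reduced_cone n. 3 * x 0 - (\<Sum>i=1..n. x i) > 0}"

definition U5 :: "nat \<Rightarrow> nat \<Rightarrow> (int \<times> (nat \<Rightarrow> int)) set" where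
  "U5 n k = {A. is_class n A \<and> ind n A \<ge> 2 * int k \<and> dot_H A > 0}"

definition geq_cls :: "nat \<Rightarrow> int \<times> (nat \<Rightarrow> int) \<Rightarrow> int \<times> (nat \<Rightarrow> int) \<Rightarrow> bool" where
  "geq_cls n A B \<longleftrightarrow> (\<forall>x\<in>cone_c1pos n. omega_eval n x A \<ge> omega_eval n x B)"

definition minimal_U5 :: "nat \<Rightarrow> nat \<Rightarrow> int \<times> (nat \<Rightarrow> int) \<Rightarrow> bool" where
  "minimal_U5 n k A \<longleftrightarrow> A \<in> U5 n k \<and> \<not> (\<exists>B\<in>U5 n k. B \<noteq> A \<and> geq_cls n A B)"

text \<open>Reduced: a > 0, b_1 >= ... >= b_n >= 0, a >= b_1 + b_2 + b_3
  (b_i = 0 for i > n by the representation convention).\<close>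
definition reduced_cls :: "nat \<Rightarrow> int \<times> (nat \<Rightarrow> int) \<Rightarrow> bool" where
  "reduced_cls n A \<longleftrightarrow> fst A > 0 \<and> (\<forall>i\<in>{1..<n}. snd A (Suc i) \<le> snd A i)
     \<and> (\<forall>i\<in>{1..n}. snd A i \<ge> 0) \<and> fst A \<ge> snd A 1 + snd A 2 + snd A 3"

end

theory Submission
  imports Defs "HOL-Combinatorics.Permutations"
begin

text \<open>A minimal class \<open>A = aH - \<Sum> b_i E_i\<close> is fixed by every move \<open>A \<mapsto> B\<close> with
  \<open>B \<in> U_5\<close> and \<open>\<omega>(B) \<le> \<omega>(A)\<close> on the whole cone. As
  \<open>ind(A) = a^2 + 3a - \<Sum> b_i(b_i + 1)\<close>, each inequality in the conclusion is forced by
  such a move: the reflection \<open>b_i \<mapsto> -b_i - 1\<close> and the swap of \<open>b_i\<close> and \<open>b_(i+1)\<close>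
  preserve the index, while subtracting \<open>H - E_1 - E_2 - E_3\<close>, respectively
  \<open>3H - \<Sum> E_i\<close>, does not lower it as long as \<open>a < b_1 + b_2 + b_3\<close>, respectively
  \<open>3a \<le> \<Sum> b_i\<close>. The subtracted class keeps \<open>a > 0\<close>, and so stays in \<open>U_5\<close>,
  because a class of positive index has \<open>a > 0\<close> or \<open>a < -3\<close>.\<close>

lemma reduced_cone_last_pos: "x \<in> reduced_cone n \<Longrightarrow> 0 < x n"
  by (auto simp: reduced_cone_def split: if_splits)

lemma reduced_cone_decreasing:
  assumes "x \<in> reduced_cone n" "i \<in> {1..<n}"
  shows "x (Suc i) \<le> x i"
proof (cases "n = 2")
  case True
  with assms show ?thesis by (auto simp: reduced_cone_def numeral_2_eq_2 le_Suc_eq)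
qed (use assms in \<open>auto simp: reduced_cone_def\<close>)

lemma reduced_cone_pos:
  assumes x: "x \<in> reduced_cone n" and i: "i \<in> {1..n}"
  shows "0 < x i"
proof -
  from i have "1 \<le> i" "i \<le> n" by auto
  have "x n \<le> x i"
    using \<open>i \<le> n\<close>
  proof (induction i rule: inc_induct)
    case (step m)
    then show ?case
      using reduced_cone_decreasing[OF x, of m] \<open>1 \<le> i\<close> by fastforce
  qed simp
  then show ?thesis
    using reduced_cone_last_pos[OF x] by linarith
qed

lemma reduced_cone_first_three_le:
  assumes "x \<in> reduced_cone n"
  shows "(\<Sum>i=1..min n 3. x i) \<le> x 0"
proof -
  consider "n = 0" | "n = 1" | "n = 2" | "n \<ge> 3" by linarith
  then show ?thesis
  proof cases
    case 4
    then have "{1..min n 3} = {1, 2, 3}" by auto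
    with 4 assms show ?thesis by (simp add: reduced_cone_def)
  qed (use assms in \<open>auto simp: reduced_cone_def numeral_2_eq_2\<close>)
qed

lemma ind_eq: "ind n (a, b) = a\<^sup>2 + 3 * a - (\<Sum>i=1..n. b i ^ 2 + b i)"
  by (simp add: ind_def self_int_def K0_dot_def sum.distrib)

lemma square_plus_self_nonneg: "0 \<le> (c::int)\<^sup>2 + c"
proof -
  have "0 \<le> c * (c + 1)"
    by (cases "0 \<le> c") (auto intro: mult_nonneg_nonneg mult_nonpos_nonpos)
  then show ?thesis by (simp add: power2_eq_square algebra_simps)
qed

lemma ind_pos_imp: "0 < ind n (a, b) \<Longrightarrow> 0 < a \<or> a < -3"
proof -
  assume "0 < ind n (a, b)"
  moreover have "0 \<le> (\<Sum>i=1..n. b i ^ 2 + b i)"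
    by (intro sum_nonneg square_plus_self_nonneg)
  ultimately have "0 < a * (a + 3)"
    by (simp add: ind_eq power2_eq_square algebra_simps)
  then show ?thesis
    by (auto simp: zero_less_mult_iff)
qed

lemma sum_first_three_class:
  assumes "is_class n (a, b)"
  shows "(\<Sum>i=1..min n 3. b i) = b 1 + b 2 + b 3"
proof -
  have "(\<Sum>i=1..min n 3. b i) = (\<Sum>i\<in>{1, 2, 3}. b i)"
    using assms by (intro sum.mono_neutral_left) (auto simp: is_class_def)
  then show ?thesis by simp
qed

lemma geq_clsI:
  assumes "\<And>x. x \<in> cone_c1pos n \<Longrightarrow>
    (\<Sum>i=1..n. x i * of_int (b i - b' i)) \<le> of_int (a - a') * x 0"
  shows "geq_cls n (a, b) (a', b')"
proof -
  have "omega_eval n x (a, b) - omega_eval n x (a', b') =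
      of_int (a - a') * x 0 - (\<Sum>i=1..n. x i * of_int (b i - b' i))" for x
    by (simp add: omega_eval_def right_diff_distrib sum_subtractf algebra_simps)
  with assms show ?thesis
    unfolding geq_cls_def by (smt (verit))
qed

lemma minimal_U5_eqI:
  assumes "minimal_U5 n k A" "is_class n B" "0 < fst B" "ind n A \<le> ind n B"
    and "geq_cls n A B"
  shows "B = A"
proof -
  have "A \<in> U5 n k" and no_below: "\<not> (\<exists>B\<in>U5 n k. B \<noteq> A \<and> geq_cls n A B)"
    using assms(1) by (auto simp: minimal_U5_def)
  then have "B \<in> U5 n k"
    using assms(2-4) by (auto simp: U5_def dot_H_def)
  with no_below assms(5) show ?thesis by blast
qed

lemma minimal_U5_class:
  assumes "minimal_U5 n k (a, b)"
  shows "is_class n (a, b)" "0 < a" "2 * int k \<le> ind n (a, b)"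
  using assms by (auto simp: minimal_U5_def U5_def dot_H_def)

lemma minimal_U5_nonneg:
  assumes min: "minimal_U5 n k (a, b)" and i: "i \<in> {1..n}"
  shows "0 \<le> b i"
proof (rule ccontr)
  assume neg: "\<not> 0 \<le> b i"
  define b' where "b' = b(i := - b i - 1)"
  have "(\<Sum>j=1..n. b' j ^ 2 + b' j) = (\<Sum>j=1..n. b j ^ 2 + b j)"
    by (intro sum.cong) (auto simp: b'_def power2_eq_square algebra_simps)
  then have "ind n (a, b') = ind n (a, b)"
    by (simp add: ind_eq)
  moreover have "is_class n (a, b')"
    using minimal_U5_class(1)[OF min] i by (auto simp: is_class_def b'_def)
  moreover have "geq_cls n (a, b) (a, b')"
  proof (rule geq_clsI)
    fix x assume "x \<in> cone_c1pos n"
    then have "0 < x i"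
      using reduced_cone_pos i by (auto simp: cone_c1pos_def)
    have "(\<Sum>j=1..n. x j * of_int (b j - b' j)) =
        (\<Sum>j=1..n. if j = i then x i * of_int (2 * b i + 1) else 0)"
      by (intro sum.cong) (auto simp: b'_def)
    also have "\<dots> = x i * of_int (2 * b i + 1)"
      using i by simp
    also have "\<dots> \<le> 0"
      using \<open>0 < x i\<close> neg by (intro mult_nonneg_nonpos) auto
    finally show "(\<Sum>j=1..n. x j * of_int (b j - b' j)) \<le> of_int (a - a) * x 0"
      by simp
  qed
  ultimately have "(a, b') = (a, b)"
    using minimal_U5_eqI[OF min, of "(a, b')"] minimal_U5_class(2)[OF min] by simp
  then have "b' i = b i" by simp
  with neg show False by (simp add: b'_def)
qed

lemma minimal_U5_decreasing:
  assumes min: "minimal_U5 n k (a, b)" and i: "i \<in> {1..<n}"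
  shows "b (Suc i) \<le> b i"
proof (rule ccontr)
  assume inc: "\<not> b (Suc i) \<le> b i"
  define b' where "b' = b \<circ> Transposition.transpose i (Suc i)"
  have "Transposition.transpose i (Suc i) permutes {1..n}"
    using i by (intro permutes_swap_id) auto
  then have "(\<Sum>j=1..n. b' j ^ 2 + b' j) = (\<Sum>j=1..n. b j ^ 2 + b j)"
    using sum.permute[where g = "\<lambda>j. b j ^ 2 + b j"] by (simp add: b'_def comp_def)
  then have "ind n (a, b') = ind n (a, b)"
    by (simp add: ind_eq)
  moreover have "is_class n (a, b')"
    using minimal_U5_class(1)[OF min] i by (auto simp: is_class_def b'_def transpose_def)
  moreover have "geq_cls n (a, b) (a, b')"
  proof (rule geq_clsI)
    fix x assume "x \<in> cone_c1pos n"
    then have "x (Suc i) \<le> x i"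
      using reduced_cone_decreasing i by (auto simp: cone_c1pos_def)
    have "(\<Sum>j=1..n. x j * of_int (b j - b' j)) = (\<Sum>j\<in>{i, Suc i}. x j * of_int (b j - b' j))"
      using i by (intro sum.mono_neutral_right) (auto simp: b'_def transpose_def)
    also have "\<dots> = (x i - x (Suc i)) * of_int (b i - b (Suc i))"
      by (simp add: b'_def algebra_simps)
    also have "\<dots> \<le> 0"
      using \<open>x (Suc i) \<le> x i\<close> inc by (intro mult_nonneg_nonpos) auto
    finally show "(\<Sum>j=1..n. x j * of_int (b j - b' j)) \<le> of_int (a - a) * x 0"
      by simp
  qed
  ultimately have "(a, b') = (a, b)"
    using minimal_U5_eqI[OF min, of "(a, b')"] minimal_U5_class(2)[OF min] by simp
  then have "b' i = b i" by simp
  with inc show False by (simp add: b'_def)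
qed

text \<open>Subtracting \<open>dH - \<Sum>_(j\<in>J) E_j\<close> raises the index by
  \<open>2 \<Sum>_(j\<in>J) b_j - (2da - d^2 + 3d)\<close>.\<close>

lemma minimal_U5_blowdown_bound:
  fixes d :: int
  assumes min: "minimal_U5 n k (a, b)" and "1 \<le> k"
    and J: "J \<subseteq> {1..n}" and d: "0 < d" "d \<le> 3"
    and area: "\<And>x. x \<in> cone_c1pos n \<Longrightarrow> (\<Sum>j\<in>J. x j) \<le> of_int d * x 0"
  shows "2 * (\<Sum>j\<in>J. b j) < 2 * d * a - d\<^sup>2 + 3 * d"
proof (rule ccontr)
  assume big: "\<not> ?thesis"
  define b' where "b' = (\<lambda>j. if j \<in> J then b j - 1 else b j)"
  have "(\<Sum>j=1..n. b j ^ 2 + b j) - (\<Sum>j=1..n. b' j ^ 2 + b' j) =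
      (\<Sum>j=1..n. if j \<in> J then 2 * b j else 0)"
    unfolding sum_subtractf[symmetric]
    by (intro sum.cong) (auto simp: b'_def power2_eq_square algebra_simps)
  also have "\<dots> = 2 * (\<Sum>j\<in>J. b j)"
    using J by (simp add: sum.inter_restrict[symmetric] Int_absorb1 sum_distrib_left)
  finally have "ind n (a, b) \<le> ind n (a - d, b')"
    using big by (simp add: ind_eq power2_eq_square algebra_simps)
  moreover have "0 < ind n (a, b)"
    using minimal_U5_class(3)[OF min] \<open>1 \<le> k\<close> by linarith
  ultimately have "0 < a - d"
    using ind_pos_imp[of n "a - d" b'] minimal_U5_class(2)[OF min] d by linarith
  moreover have "is_class n (a - d, b')"
    using minimal_U5_class(1)[OF min] J by (auto simp: is_class_def b'_def)
  moreover have "geq_cls n (a, b) (a - d, b')"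
  proof (rule geq_clsI)
    fix x assume "x \<in> cone_c1pos n"
    have "(\<Sum>j=1..n. x j * of_int (b j - b' j)) = (\<Sum>j=1..n. if j \<in> J then x j else 0)"
      by (intro sum.cong) (auto simp: b'_def)
    also have "\<dots> = (\<Sum>j\<in>J. x j)"
      using J by (simp add: sum.inter_restrict[symmetric] Int_absorb1)
    finally show "(\<Sum>j=1..n. x j * of_int (b j - b' j)) \<le> of_int (a - (a - d)) * x 0"
      using area[OF \<open>x \<in> cone_c1pos n\<close>] by simp
  qed
  ultimately have "(a - d, b') = (a, b)"
    using minimal_U5_eqI[OF min, of "(a - d, b')"] \<open>ind n (a, b) \<le> ind n (a - d, b')\<close>
    by simp
  with d show False by simp
qed

lemma minimal_U5_first_three_le:
  assumes "minimal_U5 n k (a, b)" "1 \<le> k"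
  shows "b 1 + b 2 + b 3 \<le> a"
proof -
  have "2 * (\<Sum>j=1..min n 3. b j) < 2 * 1 * a - 1\<^sup>2 + 3 * 1"
    using assms reduced_cone_first_three_le
    by (intro minimal_U5_blowdown_bound) (auto simp: cone_c1pos_def)
  then show ?thesis
    using sum_first_three_class[OF minimal_U5_class(1)[OF assms(1)]] by simp
qed

lemma minimal_U5_c1_pos:
  assumes "minimal_U5 n k (a, b)" "1 \<le> k"
  shows "1 \<le> 3 * a - (\<Sum>i=1..n. b i)"
proof -
  have "2 * (\<Sum>j=1..n. b j) < 2 * 3 * a - 3\<^sup>2 + 3 * 3"
    using assms by (intro minimal_U5_blowdown_bound) (auto simp: cone_c1pos_def)
  then show ?thesis by simp
qed

theorem lemma4p4:
  fixes n k :: nat and a :: int and b :: "nat \<Rightarrow> int"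
  assumes "n \<ge> 1" and "k \<ge> 1"
    and "minimal_U5 n k (a, b)"
  shows "reduced_cls n (a, b) \<and> 3 * a - (\<Sum>i=1..n. b i) \<ge> 1"
  using minimal_U5_class(2) minimal_U5_decreasing minimal_U5_nonneg
    minimal_U5_first_three_le minimal_U5_c1_pos assms(2,3)
  by (simp add: reduced_cls_def)

end
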